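(* Let $Q=[(n_1,q_1),\dots,(n_m,q_m)]$ be a compatible pointed irregular type and $g=(\pi,\mathbf d)\in G$. Then $g\cdot Q$ is an admissible deformation of $Q$ with $\mathrm{slope}\le K$, i.e. $g\cdot Q=Q_{\mathbf a}$ for some $\mathbf a\in\mathbf B(Q)$, if and only if $g\in W(Q)$, i.e. $d_i\equiv d_j\pmod{r_{ij}}$ for all $i,j$.
   Context: Exponential factors: finite sums $q=\sum_ka_kx^k$, $a_k\in\mathbb C$, $k\in\mathbb Q_{>0}$; $E(q)$ = exponents with nonzero coefficient; $\mathrm{slope}(q)=\max E(q)$; $\mathrm{ram}(q)$ = least $r\ge1$ with $q\in x^{1/r}\mathbb C[x^{1/r}]$. Galois operator $\sigma(\sum a_kx^k)=\sum a_ke^{-2\pi\sqrt{-1}k}x^k$; Stokes circle $\langle q\rangle=\{\sigma^i(q)\}$. Truncation $\tau_k(\sum a_{k'}x^{k'})=\sum_{k'\ge k}a_{k'}x^{k'}$. $\mathrm{Levels}(q)=\{\mathrm{slope}(q-\sigma^i(q))\}\setminus\{0\}$. Common part/fission exponent for $q,\hat q$ in distinct orbits: with $k$ the smallest element of $E(q)$ with $\langle\tau_k(q)\rangle=\langle\tau_k(\hat q)\rangle$ (if any) $q_c=\tau_k(q)$, $\hat q_c=\tau_k(\hat q)$, else $0$; $f_{q,\hat q}=\max(\mathrm{slope}(q-q_c),\mathrm{slope}(\hat q-\hat q_c))$. Pointed irregular type $Q=[(n_1,q_1),\dots,(n_m,q_m)]$: $n_i\in\mathbb N_{>0}$, $q_i$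 in distinct orbits; compatible if $\langle\tau_k(q_i)\rangle=\langle\tau_k(q_j)\rangle\Rightarrow\tau_k(q_i)=\tau_k(q_j)$. $Q'\sim Q$ means same length and multiplicities and $\mathrm{slope}(\sigma^k(q'_i)-\sigma^l(q'_j))=\mathrm{slope}(\sigma^k(q_i)-\sigma^l(q_j))$ for all $i,j$, $0\le k\le\mathrm{ram}(q_i)$, $0\le l\le\mathrm{ram}(q_j)$. $r=\mathrm{lcm}\,\mathrm{ram}(q_i)$, $K=\max\mathrm{slope}(q_i)$, $s=rK$, $Q_{\mathbf a}=[(n_i,\sum_{j=1}^sa_{i,j}x^{j/r})]$, $\mathbf B(Q)=\{\mathbf a\in\mathbb C^{ms}:Q_{\mathbf a}\sim Q\}$. Weyl group: let $r_i=\mathrm{ram}(q_i)$; for $i\ne j$ let $r_{ij}=\mathrm{ram}(q_c)$ where $q_c$ is the common part of $q_i,q_j$ (so $r_{ij}\mid r_i,r_j$), and $r_{ii}=r_i$. Let $\mathrm{Aut}(Q)$ be the group of permutations $\pi$ of $\{1,\dots,m\}$ with $n_{\pi(i)}=n_i$, $\mathrm{Levels}(q_{\pi(i)})=\mathrm{Levels}(q_i)$ and $f_{q_{\pi(i)},q_{\pi(j)}}=f_{q_i,q_j}$ for all $i\ne j$ (this is the automorphism group of the fission tree; such $\pi$ satisfy $r_{\pi(i)}=r_i$). Let $G=\mathrm{Aut}(Q)\ltimes\prod_{i=1}^m\mathbb Z/r_i\mathbb Z$ (with $\mathrm{Aut}(Q)$ permuting the factors), acting on lists of the same shape by $(\pi,\mathbf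 d)\cdot[(n_1,p_1),\dots,(n_m,p_m)]=[(n_{\pi(1)},\sigma^{d_{\pi(1)}}(p_{\pi(1)})),\dots,(n_{\pi(m)},\sigma^{d_{\pi(m)}}(p_{\pi(m)}))]$. The Weyl group is $W(Q)=\{(\pi,\mathbf d)\in G:d_i\equiv d_j\bmod r_{ij}\ \forall i,j\}$. *)

theory Defs
  imports Complex_Main "HOL-Library.Function_Algebras" "HOL-Combinatorics.Permutations" "HOL-Number_Theory.Cong"
begin

text \<open>An exponential factor q = sum_k a_k x^k (finite sum, k positive rational, a_k complex)
  is represented by its coefficient function rat => complex.\<close>

type_synonym expfac = "rat \<Rightarrow> complex"

definition is_expfac :: "expfac \<Rightarrow> bool" where
  "is_expfac q \<longleftrightarrow> finite {k. q k \<noteq> 0} \<and> (\<forall>k. q k \<noteq> 0 \<longrightarrow> k > 0)"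

definition expo :: "expfac \<Rightarrow> rat set" where
  "expo q = {k. q k \<noteq> 0}"

definition slope :: "expfac \<Rightarrow> rat" where
  "slope q = (if expo q = {} then 0 else Max (expo q))"

definition ram :: "expfac \<Rightarrow> nat" where
  "ram q = (LEAST r::nat. r \<ge> 1 \<and> (\<forall>k\<in>expo q. k * of_nat r \<in> \<int>))"

definition sigma :: "expfac \<Rightarrow> expfac" where
  "sigma q = (\<lambda>k. cis (- 2 * pi * real_of_rat k) * q k)"

definition stokes :: "expfac \<Rightarrow> expfac set" where
  "stokes q = range (\<lambda>i::nat. (sigma ^^ i) q)"

definition trunc :: "rat \<Rightarrow> expfac \<Rightarrow> expfac" where
  "trunc k q = (\<lambda>k'. if k \<le> k' then q k' else 0)"

definition levels :: "expfac \<Rightarrow> rat set" where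
  "levels q = {slope (q - (sigma ^^ i) q) | i::nat. True} - {0}"

definition common_part :: "expfac \<Rightarrow> expfac \<Rightarrow> expfac \<times> expfac" where
  "common_part q qh =
     (let S = {k \<in> expo q. stokes (trunc k q) = stokes (trunc k qh)}
      in if S = {} then (0, 0) else (trunc (Min S) q, trunc (Min S) qh))"

definition fission_exp :: "expfac \<Rightarrow> expfac \<Rightarrow> rat" where
  "fission_exp q qh =
     max (slope (q - fst (common_part q qh))) (slope (qh - snd (common_part q qh)))"

text \<open>Q = [(n_1,q_1),...,(n_m,q_m)] as a list (indices 0..m-1).\<close>
type_synonym pit = "(nat \<times> expfac) list"

definition pointed_irr_type :: "pit \<Rightarrow> bool" where
  "pointed_irr_type Q \<longleftrightarrow>
     (\<forall>i<length Q. fst (Q ! i) > 0 \<and> is_expfac (snd (Q ! i))) \<and>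
     (\<forall>i<length Q. \<forall>j<length Q. i \<noteq> j \<longrightarrow> stokes (snd (Q ! i)) \<noteq> stokes (snd (Q ! j)))"

definition compatible :: "pit \<Rightarrow> bool" where
  "compatible Q \<longleftrightarrow> pointed_irr_type Q \<and>
     (\<forall>i<length Q. \<forall>j<length Q. \<forall>k.
        stokes (trunc k (snd (Q ! i))) = stokes (trunc k (snd (Q ! j))) \<longrightarrow>
        trunc k (snd (Q ! i)) = trunc k (snd (Q ! j)))"

definition pit_equiv :: "pit \<Rightarrow> pit \<Rightarrow> bool" where
  "pit_equiv Q' Q \<longleftrightarrow> length Q' = length Q \<and>
     (\<forall>i<length Q. fst (Q' ! i) = fst (Q ! i)) \<and>
     (\<forall>i<length Q. \<forall>j<length Q. \<forall>k\<le>ram (snd (Q ! i)). \<forall>l\<le>ram (snd (Q ! j)).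
        slope ((sigma ^^ k) (snd (Q' ! i)) - (sigma ^^ l) (snd (Q' ! j))) =
        slope ((sigma ^^ k) (snd (Q ! i)) - (sigma ^^ l) (snd (Q ! j))))"

definition ramQ :: "pit \<Rightarrow> nat" where
  "ramQ Q = Lcm (set (map (\<lambda>p. ram (snd p)) Q))"

definition maxslope :: "pit \<Rightarrow> rat" where
  "maxslope Q = (if Q = [] then 0 else Max (set (map (\<lambda>p. slope (snd p)) Q)))"

definition sQ :: "pit \<Rightarrow> nat" where
  "sQ Q = nat \<lfloor>of_nat (ramQ Q) * maxslope Q\<rfloor>"

definition monom_ef :: "complex \<Rightarrow> rat \<Rightarrow> expfac" where
  "monom_ef c e = (\<lambda>k. if k = e then c else 0)"

text \<open>Q_a = [(n_i, sum_{j=1}^s a_{i,j} x^{j/r})]; a is indexed by i < m (0-based) and 1 <= j <= s.\<close>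
definition Q_a :: "pit \<Rightarrow> (nat \<Rightarrow> nat \<Rightarrow> complex) \<Rightarrow> pit" where
  "Q_a Q a = map (\<lambda>i. (fst (Q ! i),
       (\<Sum>j\<in>{1..sQ Q}. monom_ef (a i j) (of_nat j / of_nat (ramQ Q))))) [0..<length Q]"

definition BQ :: "pit \<Rightarrow> (nat \<Rightarrow> nat \<Rightarrow> complex) set" where
  "BQ Q = {a. pit_equiv (Q_a Q a) Q}"

definition rr :: "pit \<Rightarrow> nat \<Rightarrow> nat \<Rightarrow> nat" where
  "rr Q i j = (if i = j then ram (snd (Q ! i))
               else ram (fst (common_part (snd (Q ! i)) (snd (Q ! j)))))"

definition AutQ :: "pit \<Rightarrow> (nat \<Rightarrow> nat) set" where
  "AutQ Q = {\<pi>. \<pi> permutes {..<length Q} \<and>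
     (\<forall>i<length Q. fst (Q ! \<pi> i) = fst (Q ! i) \<and>
                   levels (snd (Q ! \<pi> i)) = levels (snd (Q ! i))) \<and>
     (\<forall>i<length Q. \<forall>j<length Q. i \<noteq> j \<longrightarrow>
        fission_exp (snd (Q ! \<pi> i)) (snd (Q ! \<pi> j)) = fission_exp (snd (Q ! i)) (snd (Q ! j)))}"

text \<open>G = Aut(Q) semidirect prod_i Z/r_i Z; an element is (pi, d) with d_i in {0..<r_i}
  (canonical representatives), d_i = 0 for i >= m.\<close>
definition GQ :: "pit \<Rightarrow> ((nat \<Rightarrow> nat) \<times> (nat \<Rightarrow> nat)) set" where
  "GQ Q = {(\<pi>, d). \<pi> \<in> AutQ Q \<and> (\<forall>i<length Q. d i < ram (snd (Q ! i))) \<and>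
                   (\<forall>i\<ge>length Q. d i = 0)}"

definition act :: "(nat \<Rightarrow> nat) \<times> (nat \<Rightarrow> nat) \<Rightarrow> pit \<Rightarrow> pit" where
  "act g P = map (\<lambda>i. (fst (P ! fst g i), (sigma ^^ (snd g (fst g i))) (snd (P ! fst g i))))
                 [0..<length P]"

definition WQ :: "pit \<Rightarrow> ((nat \<Rightarrow> nat) \<times> (nat \<Rightarrow> nat)) set" where
  "WQ Q = {(\<pi>, d) \<in> GQ Q. \<forall>i<length Q. \<forall>j<length Q. [d i = d j] (mod rr Q i j)}"

end

theory Submission
  imports Defs
begin

text \<open>
  The operator \<open>\<sigma>\<close> multiplies the coefficient of \<open>x\<^sup>k\<close> by \<open>e\<^sup>-\<^sup>2\<^sup>\<pi>\<^sup>i\<^sup>k\<close>, so \<open>\<sigma>\<^sup>t\<close> fixes \<open>x\<^sup>k\<close>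
  exactly when \<open>t k \<in> \<int>\<close>. Hence \<open>slope(\<sigma>\<^sup>a q\<^sub>i - \<sigma>\<^sup>b q\<^sub>j)\<close> is the largest level of \<open>q\<^sub>i\<close> above the
  fission exponent \<open>f\<^sub>i\<^sub>j\<close> (with \<open>f\<^sub>i\<^sub>i = 0\<close>) that is moved by \<open>\<sigma>\<^sup>a\<^sup>-\<^sup>b\<close>, or \<open>f\<^sub>i\<^sub>j\<close> if there is
  none; and \<open>r\<^sub>i\<^sub>j\<close> divides \<open>t\<close> exactly when \<open>\<sigma>\<^sup>t\<close> moves none of these levels. Elements of
  \<open>Aut(Q)\<close> preserve levels and fission exponents, so \<open>g\<cdot>Q \<sim> Q\<close> says that shifting the exponent
  difference by \<open>d\<^sub>\<pi>\<^sub>(\<^sub>i\<^sub>) - d\<^sub>\<pi>\<^sub>(\<^sub>j\<^sub>)\<close> never changes this quantity, which happens exactly when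
  \<open>r\<^sub>i\<^sub>j\<close> divides the shift. Finally every \<open>g\<cdot>Q\<close> is of the form \<open>Q\<^sub>a\<close>, because its exponents
  lie in \<open>(1/r)\<int>\<close> and are at most \<open>K\<close>.
\<close>

section \<open>Rotations\<close>

text \<open>\<open>rot t\<close> is \<open>\<sigma>\<^sup>t\<close> for an arbitrary integer \<open>t\<close>.\<close>

definition rot :: "int \<Rightarrow> expfac \<Rightarrow> expfac" where
  "rot t x = (\<lambda>k. cis (- 2 * pi * real_of_int t * real_of_rat k) * x k)"

lemma of_rat_in_Ints_iff: "(of_rat q :: real) \<in> \<int> \<longleftrightarrow> q \<in> \<int>"
proof
  assume "(of_rat q :: real) \<in> \<int>"
  then obtain n where "(of_rat q :: real) = of_rat (of_int n)" by (auto elim: Ints_cases)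
  then show "q \<in> \<int>" by (simp only: of_rat_eq_iff) simp
qed (auto elim!: Ints_cases)

lemma cis_eq_cis_iff: "cis u = cis v \<longleftrightarrow> (u - v) / (2 * pi) \<in> \<int>"
proof -
  have "cis u = cis v \<longleftrightarrow> sin u = sin v \<and> cos u = cos v"
    by (auto simp: complex_eq_iff)
  also have "\<dots> \<longleftrightarrow> (\<exists>n::int. u = v + 2 * pi * n)" by (rule sin_cos_eq_iff)
  also have "\<dots> \<longleftrightarrow> (\<exists>n::int. (u - v) / (2 * pi) = n)"
    by (auto simp: field_simps)
  finally show ?thesis by (auto simp: Ints_def)
qed

lemma cis_rot_eq_iff:
  "cis (- 2 * pi * real_of_int a * real_of_rat k) = cis (- 2 * pi * real_of_int b * real_of_rat k)
   \<longleftrightarrow> of_int (a - b) * k \<in> \<int>"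
proof -
  have "(- 2 * pi * real_of_int a * real_of_rat k - - 2 * pi * real_of_int b * real_of_rat k) / (2 * pi)
        = - of_rat (of_int (a - b) * k)"
    by (simp add: field_simps of_rat_mult of_rat_diff)
  then show ?thesis
    by (simp only: cis_eq_cis_iff minus_in_Ints_iff of_rat_in_Ints_iff)
qed

lemma rot_0 [simp]: "rot 0 x = x"
  by (simp add: rot_def)

lemma rot_rot: "rot s (rot t x) = rot (s + t) x"
proof (rule ext)
  fix k
  have "cis (- 2 * pi * real_of_int s * real_of_rat k) * cis (- 2 * pi * real_of_int t * real_of_rat k)
        = cis (- 2 * pi * real_of_int (s + t) * real_of_rat k)"
    by (simp add: cis_mult algebra_simps)
  then show "rot s (rot t x) k = rot (s + t) x k"
    by (simp add: rot_def mult.assoc[symmetric])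
qed

lemma funpow_sigma_eq_rot: "(sigma ^^ n) x = rot (int n) x"
proof -
  have "sigma x = rot 1 x" for x
    by (simp add: sigma_def rot_def)
  then show ?thesis
    by (induction n) (simp_all add: rot_rot add.commute)
qed

lemma rot_eq_0_iff [simp]: "rot t x k = 0 \<longleftrightarrow> x k = 0"
  by (simp add: rot_def)

lemma expo_rot [simp]: "expo (rot t x) = expo x"
  by (simp add: expo_def)

lemma is_expfac_rot: "is_expfac x \<Longrightarrow> is_expfac (rot t x)"
  by (simp add: is_expfac_def)

lemma rot_diff_rot_eq_0_iff:
  "(rot a x - rot b x) k = 0 \<longleftrightarrow> x k = 0 \<or> of_int (a - b) * k \<in> \<int>"
proof -
  have "(rot a x - rot b x) k = (cis (- 2 * pi * real_of_int a * real_of_rat k)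
          - cis (- 2 * pi * real_of_int b * real_of_rat k)) * x k"
    by (simp add: rot_def algebra_simps)
  then show ?thesis
    by (simp only: mult_eq_0_iff right_minus_eq cis_rot_eq_iff) blast
qed

lemma finite_expo_diff: "finite (expo x) \<Longrightarrow> finite (expo y) \<Longrightarrow> finite (expo (x - y))"
  by (rule finite_subset[of _ "expo x \<union> expo y"]) (auto simp: expo_def)

lemma finite_expo: "is_expfac x \<Longrightarrow> finite (expo x)"
  by (simp add: is_expfac_def expo_def)

lemma expfac_pos: "is_expfac x \<Longrightarrow> x k \<noteq> 0 \<Longrightarrow> 0 < k"
  by (simp add: is_expfac_def)

lemma is_expfac_diff: "is_expfac x \<Longrightarrow> is_expfac y \<Longrightarrow> is_expfac (x - y)"
  using finite_expo_diff[of x y] by (force simp: is_expfac_def expo_def)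

lemma is_expfac_trunc: "is_expfac x \<Longrightarrow> is_expfac (trunc k x)"
  unfolding is_expfac_def trunc_def by (auto elim!: rev_finite_subset)

lemma slope_0 [simp]: "slope 0 = 0"
  by (simp add: slope_def expo_def)

lemma slope_diff_commute: "slope (x - y) = slope (y - x)"
proof -
  have "expo (x - y) = expo (y - x)"
    by (auto simp: expo_def)
  then show ?thesis by (simp add: slope_def)
qed

lemma le_slope: "finite (expo x) \<Longrightarrow> x k \<noteq> 0 \<Longrightarrow> k \<le> slope x"
  by (auto simp: slope_def expo_def)

lemma coeff_slope_nonzero: "finite (expo x) \<Longrightarrow> x \<noteq> 0 \<Longrightarrow> x (slope x) \<noteq> 0"
proof -
  assume "finite (expo x)" "x \<noteq> 0"
  moreover from \<open>x \<noteq> 0\<close> have "expo x \<noteq> {}"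
    by (auto simp: expo_def)
  ultimately have "Max (expo x) \<in> expo x" by simp
  then show ?thesis using \<open>expo x \<noteq> {}\<close> by (simp add: slope_def expo_def)
qed

lemma slope_mem_expo: "finite (expo x) \<Longrightarrow> slope x \<noteq> 0 \<Longrightarrow> slope x \<in> expo x"
  using coeff_slope_nonzero[of x] by (cases "x = 0") (auto simp: expo_def)

lemma slope_pos: "is_expfac x \<Longrightarrow> x \<noteq> 0 \<Longrightarrow> 0 < slope x"
  using coeff_slope_nonzero finite_expo expfac_pos by blast

lemma slope_eqI: "finite (expo x) \<Longrightarrow> x s \<noteq> 0 \<Longrightarrow> (\<And>k. s < k \<Longrightarrow> x k = 0) \<Longrightarrow> slope x = s"
proof -
  assume "finite (expo x)" "x s \<noteq> 0" "\<And>k. s < k \<Longrightarrow> x k = 0"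
  then have "Max (expo x) = s" "expo x \<noteq> {}"
    by (auto intro!: Max_eqI simp: expo_def not_less[symmetric])
  then show ?thesis by (simp add: slope_def)
qed

lemma slope_diff_trunc_less:
  assumes "finite (expo x)" and "0 < k"
  shows "slope (x - trunc k x) < k"
proof (cases "x - trunc k x = 0")
  case False
  have "finite (expo (x - trunc k x))"
    by (rule finite_subset[OF _ assms(1)]) (auto simp: expo_def trunc_def)
  then have "(x - trunc k x) (slope (x - trunc k x)) \<noteq> 0"
    using coeff_slope_nonzero False by blast
  then show ?thesis by (auto simp: trunc_def split: if_splits)
qed (use assms in simp)

lemma mult_denom_in_Ints: "k * of_int (snd (quotient_of k)) \<in> \<int>"
proof -
  obtain n d where nd: "quotient_of k = (n, d)" by (cases "quotient_of k")
  then have "k = of_int n / of_int d" and "0 < d"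
    by (rule quotient_of_div, rule quotient_of_denom_pos)
  then have "k * of_int d = of_int n" by simp
  then show ?thesis using nd by simp
qed

lemma ram_ge_1_and_mult_Ints:
  assumes "finite (expo x)"
  shows "1 \<le> ram x \<and> (\<forall>k\<in>expo x. k * of_nat (ram x) \<in> \<int>)"
  unfolding ram_def
proof (rule LeastI_ex)
  define r where "r = (\<Prod>k\<in>expo x. nat (snd (quotient_of k)))"
  have "1 \<le> r"
    unfolding r_def using quotient_of_denom_pos'
    by (simp add: Suc_le_eq prod_pos)
  moreover have "k * of_nat r \<in> \<int>" if "k \<in> expo x" for k
  proof -
    have "r = nat (snd (quotient_of k)) * (\<Prod>k\<in>expo x - {k}. nat (snd (quotient_of k)))"
      unfolding r_def using assms that by (simp add: prod.remove)
    then have "k * of_nat r = k * of_int (snd (quotient_of k))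
                 * of_nat (\<Prod>k\<in>expo x - {k}. nat (snd (quotient_of k)))"
      using quotient_of_denom_pos'[of k] by (simp add: mult.assoc)
    then show ?thesis
      using mult_denom_in_Ints[of k] by (metis Ints_mult Ints_of_nat)
  qed
  ultimately show "\<exists>r. 1 \<le> r \<and> (\<forall>k\<in>expo x. k * of_nat r \<in> \<int>)" by blast
qed

lemma ram_dvd_iff:
  assumes "finite (expo x)"
  shows "int (ram x) dvd t \<longleftrightarrow> (\<forall>k\<in>expo x. of_int t * k \<in> \<int>)"
proof
  assume "int (ram x) dvd t"
  then obtain z where "t = int (ram x) * z" by (auto elim: dvdE)
  then have "of_int t * k = of_int z * (k * of_nat (ram x))" for k :: rat
    by simp
  then show "\<forall>k\<in>expo x. of_int t * k \<in> \<int>"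
    using ram_ge_1_and_mult_Ints[OF assms] by (metis Ints_mult Ints_of_int)
next
  assume fixed: "\<forall>k\<in>expo x. of_int t * k \<in> \<int>"
  define R where "R = ram x"
  have R: "1 \<le> R" "\<forall>k\<in>expo x. k * of_nat R \<in> \<int>"
    using ram_ge_1_and_mult_Ints[OF assms] by (auto simp: R_def)
  define s where "s = t mod int R"
  have "0 \<le> s" "s < int R" using R(1) by (auto simp: s_def)
  have s_fixed: "of_int s * k \<in> \<int>" if "k \<in> expo x" for k
  proof -
    have "of_int s * k = of_int t * k - of_int (t div int R) * (k * of_nat R)"
      by (simp add: s_def minus_div_mult_eq_mod[symmetric] algebra_simps)
    then show ?thesis using fixed that R(2) by (simp add: Ints_diff Ints_mult)
  qed
  have "s = 0"
  proof (rule ccontr)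
    assume "s \<noteq> 0"
    with \<open>0 \<le> s\<close> s_fixed have "R \<le> nat s"
      unfolding R_def ram_def by (intro Least_le) (simp add: mult.commute)
    then show False using \<open>0 \<le> s\<close> \<open>s < int R\<close> by (simp add: le_nat_iff)
  qed
  then show "int (ram x) dvd t" by (simp add: s_def R_def dvd_eq_mod_eq_0)
qed

lemma rot_mod_ram: "finite (expo x) \<Longrightarrow> rot (t mod int (ram x)) x = rot t x"
proof (rule ext)
  fix k assume fin: "finite (expo x)"
  have "int (ram x) dvd (t mod int (ram x) - t)"
    by (metis mod_mod_trivial mod_eq_dvd_iff)
  then have "x k \<noteq> 0 \<Longrightarrow> of_int (t mod int (ram x) - t) * k \<in> \<int>"
    using ram_dvd_iff[OF fin] by (auto simp: expo_def)
  then show "rot (t mod int (ram x)) x k = rot t x k"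
    using cis_rot_eq_iff by (auto simp: rot_def)
qed

lemma rot_eq_rot_nat: "finite (expo x) \<Longrightarrow> \<exists>n. rot t x = rot (int n) x"
  using rot_mod_ram[of x t] ram_ge_1_and_mult_Ints[of x]
  by (intro exI[of _ "nat (t mod int (ram x))"]) simp

lemma stokes_eq_range_rot:
  assumes "finite (expo x)"
  shows "stokes x = range (\<lambda>t. rot t x)"
proof
  show "stokes x \<subseteq> range (\<lambda>t. rot t x)"
    by (auto simp: stokes_def funpow_sigma_eq_rot)
  show "range (\<lambda>t. rot t x) \<subseteq> stokes x"
    using rot_eq_rot_nat[OF assms] by (auto simp: stokes_def funpow_sigma_eq_rot)
qed

lemma stokes_eq_if_rot_eq:
  assumes "finite (expo x)" and "finite (expo y)" and "rot a x = rot b y"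
  shows "stokes x = stokes y"
proof -
  have "y = rot (- b) (rot b y)" by (simp add: rot_rot)
  also have "\<dots> = rot (a - b) x"
    unfolding assms(3)[symmetric] rot_rot by (simp add: add.commute)
  finally have y: "y = rot (a - b) x" .
  have "stokes y = range ((\<lambda>t. rot t x) \<circ> (\<lambda>t. t + (a - b)))"
    using stokes_eq_range_rot[OF assms(2)] by (simp add: y rot_rot comp_def)
  also have "\<dots> = stokes x"
    by (simp only: image_comp[symmetric] surj_plus_right stokes_eq_range_rot[OF assms(1)])
  finally show ?thesis ..
qed

section \<open>Moved exponents\<close>

text \<open>The condition \<open>of_int t * k \<notin> \<int>\<close> says that \<open>\<sigma>\<^sup>t\<close> moves the monomial \<open>x\<^sup>k\<close>.\<close>

definition moved_above :: "rat set \<Rightarrow> rat \<Rightarrow> int \<Rightarrow> rat set" where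
  "moved_above A f t = {k \<in> A. f < k \<and> of_int t * k \<notin> \<int>}"

definition top_moved :: "rat set \<Rightarrow> rat \<Rightarrow> int \<Rightarrow> rat" where
  "top_moved A f t = (if moved_above A f t = {} then f else Max (moved_above A f t))"

lemma finite_moved_above: "finite A \<Longrightarrow> finite (moved_above A f t)"
  by (simp add: moved_above_def)

lemma top_moved_0 [simp]: "top_moved A f 0 = f"
  by (simp add: top_moved_def moved_above_def)

lemma top_moved_eq_iff:
  assumes "finite A"
  shows "top_moved A f t = f \<longleftrightarrow> moved_above A f t = {}"
proof (cases "moved_above A f t = {}")
  case False
  then have "Max (moved_above A f t) \<in> moved_above A f t"
    using assms by (simp add: finite_moved_above)
  then show ?thesis using False by (simp add: top_moved_def moved_above_def)
qed (simp add: top_moved_def)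

lemma top_moved_shift:
  assumes "moved_above A f \<delta> = {}"
  shows "top_moved A f (t + \<delta>) = top_moved A f t"
proof -
  have "of_int (t + \<delta>) * k \<in> \<int> \<longleftrightarrow> of_int t * k \<in> \<int>" if "k \<in> A" "f < k" for k
  proof -
    have \<delta>: "of_int \<delta> * k \<in> \<int>"
      using assms that by (auto simp: moved_above_def)
    have distrib: "of_int (t + \<delta>) * k = of_int t * k + of_int \<delta> * k"
      by (simp add: algebra_simps)
    show ?thesis
    proof
      assume "of_int (t + \<delta>) * k \<in> \<int>"
      then have "of_int (t + \<delta>) * k - of_int \<delta> * k \<in> \<int>"
        using \<delta> by (rule Ints_diff)
      then show "of_int t * k \<in> \<int>" by (simp only: distrib add_diff_cancel_right')
    next
      assume "of_int t * k \<in> \<int>"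
      then show "of_int (t + \<delta>) * k \<in> \<int>"
        unfolding distrib using \<delta> by (rule Ints_add)
    qed
  qed
  then have "moved_above A f (t + \<delta>) = moved_above A f t"
    by (auto simp: moved_above_def)
  then show ?thesis by (simp add: top_moved_def)
qed

lemma top_moved_shift_invariant_iff:
  assumes "finite A"
  shows "(\<forall>k\<le>m. \<forall>l\<le>n. top_moved A f (int k - int l + \<delta>) = top_moved A f (int k - int l))
         \<longleftrightarrow> moved_above A f \<delta> = {}"
proof
  assume "\<forall>k\<le>m. \<forall>l\<le>n. top_moved A f (int k - int l + \<delta>) = top_moved A f (int k - int l)"
  then have "top_moved A f \<delta> = f"
    by (metis le0 diff_self of_nat_0 add_0 top_moved_0)
  then show "moved_above A f \<delta> = {}"
    using top_moved_eq_iff[OF assms] by blast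
qed (simp add: top_moved_shift)

lemma slope_eq_top_moved:
  assumes "finite (expo D)" and "finite A" and "moved_above A f t \<noteq> {}"
    and moved: "\<And>k. f < k \<Longrightarrow> D k \<noteq> 0 \<longleftrightarrow> k \<in> moved_above A f t"
  shows "slope D = top_moved A f t"
proof -
  let ?N = "moved_above A f t"
  have fin: "finite ?N" using assms(2) by (rule finite_moved_above)
  have "Max ?N \<in> ?N" using fin assms(3) by (rule Max_in)
  then have "f < Max ?N" by (simp add: moved_above_def)
  have "slope D = Max ?N"
  proof (rule slope_eqI[OF assms(1)])
    show "D (Max ?N) \<noteq> 0" using moved \<open>f < Max ?N\<close> \<open>Max ?N \<in> ?N\<close> by blast
    fix k assume "Max ?N < k"
    then have "k \<notin> ?N" and "f < k"
      using Max_ge[OF fin] \<open>f < Max ?N\<close> by force+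
    then show "D k = 0" using moved by blast
  qed
  then show ?thesis using assms(3) by (simp add: top_moved_def)
qed

lemma slope_rot_diff_self:
  assumes "is_expfac q"
  shows "slope (rot a q - rot b q) = top_moved (expo q) 0 (a - b)"
proof -
  have moved: "(rot a q - rot b q) k \<noteq> 0 \<longleftrightarrow> k \<in> moved_above (expo q) 0 (a - b)" for k
    using rot_diff_rot_eq_0_iff[of a q b k] expfac_pos[OF assms, of k]
    by (auto simp: moved_above_def expo_def)
  show ?thesis
  proof (cases "moved_above (expo q) 0 (a - b) = {}")
    case True
    then have "rot a q - rot b q = 0" using moved by auto
    then show ?thesis using True by (simp add: top_moved_def)
  next
    case False
    have "finite (expo (rot a q - rot b q))"
      using finite_expo[OF assms] by (simp add: finite_expo_diff)
    then show ?thesis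
      using finite_expo[OF assms] False moved by (rule slope_eq_top_moved)
  qed
qed

lemma levels_subset_expo:
  assumes "is_expfac q"
  shows "levels q \<subseteq> expo q"
proof
  fix l assume "l \<in> levels q"
  then obtain n where l: "l = slope (q - rot (int n) q)" "l \<noteq> 0"
    by (auto simp: levels_def funpow_sigma_eq_rot)
  have "expo (q - rot (int n) q) \<subseteq> expo q"
    by (auto simp: expo_def)
  moreover have "l \<in> expo (q - rot (int n) q)"
    using l finite_expo[OF assms] by (simp add: slope_mem_expo finite_expo_diff)
  ultimately show "l \<in> expo q" by blast
qed

lemma finite_levels: "is_expfac q \<Longrightarrow> finite (levels q)"
  using levels_subset_expo finite_expo finite_subset by metis

lemma slope_rot_diff_mem_levels:
  assumes "is_expfac q" and "slope (q - rot t q) \<noteq> 0"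
  shows "slope (q - rot t q) \<in> levels q"
proof -
  obtain n where "rot t q = (sigma ^^ n) q"
    using rot_eq_rot_nat[OF finite_expo[OF assms(1)]] funpow_sigma_eq_rot by metis
  then show ?thesis using assms(2) by (auto simp: levels_def)
qed

text \<open>The largest exponent moved by \<open>\<sigma>\<^sup>t\<close> is the level \<open>slope(\<sigma>\<^sup>t q - q)\<close>, so only levels matter.\<close>

lemma top_moved_levels:
  assumes q: "is_expfac q" and "0 \<le> f"
  shows "top_moved (levels q) f t = top_moved (expo q) f t"
proof -
  let ?N = "moved_above (expo q) f t" and ?NL = "moved_above (levels q) f t"
    and ?M = "moved_above (expo q) 0 t"
  have "?NL \<subseteq> ?N" "?N \<subseteq> ?M"
    using levels_subset_expo[OF q] \<open>0 \<le> f\<close> by (auto simp: moved_above_def)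
  have fin: "finite ?N" "finite ?M" "finite ?NL"
    using finite_expo[OF q] finite_levels[OF q] by (simp_all add: finite_moved_above)
  show ?thesis
  proof (cases "?N = {}")
    case True
    then show ?thesis using \<open>?NL \<subseteq> ?N\<close> by (simp add: top_moved_def)
  next
    case False
    then have "?M \<noteq> {}" "Max ?N \<in> ?N"
      using \<open>?N \<subseteq> ?M\<close> fin by auto
    then have "Max ?M \<in> ?N"
      using Max_in[OF fin(2)] Max_mono[OF \<open>?N \<subseteq> ?M\<close> False fin(2)]
      by (auto simp: moved_above_def)
    then have N_M: "Max ?N = Max ?M"
      using fin Max_mono[OF \<open>?N \<subseteq> ?M\<close> False fin(2)] by (simp add: antisym)
    have "slope (q - rot t q) = Max ?M"
      using slope_rot_diff_self[OF q, of t 0] \<open>?M \<noteq> {}\<close>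
      by (simp add: slope_diff_commute top_moved_def)
    then have "Max ?M \<in> levels q"
      using slope_rot_diff_mem_levels[OF q, of t] \<open>Max ?M \<in> ?N\<close> \<open>0 \<le> f\<close>
      by (auto simp: moved_above_def)
    then have "Max ?M \<in> ?NL"
      using \<open>Max ?M \<in> ?N\<close> by (simp add: moved_above_def)
    then have "Max ?NL = Max ?M"
      using fin \<open>?NL \<subseteq> ?N\<close> N_M Max_mono[OF \<open>?NL \<subseteq> ?N\<close>]
      by (metis Max_ge antisym empty_iff)
    then show ?thesis
      using N_M False \<open>Max ?M \<in> ?NL\<close> by (auto simp: top_moved_def)
  qed
qed

lemma moved_above_levels_empty_iff:
  assumes "is_expfac q" and "0 \<le> f"
  shows "moved_above (levels q) f t = {} \<longleftrightarrow> moved_above (expo q) f t = {}"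
  using top_moved_levels[OF assms, of t] finite_levels[OF assms(1)] finite_expo[OF assms(1)]
  by (simp flip: top_moved_eq_iff)

section \<open>Pairs of compatible exponential factors\<close>

locale compatible_pair =
  fixes q p :: expfac
  assumes expfac_q: "is_expfac q" and expfac_p: "is_expfac p"
    and distinct_stokes: "stokes q \<noteq> stokes p"
    and compatible: "\<And>k. stokes (trunc k q) = stokes (trunc k p) \<Longrightarrow> trunc k q = trunc k p"
begin

abbreviation common_exps :: "rat set" where
  "common_exps \<equiv> {k \<in> expo q. stokes (trunc k q) = stokes (trunc k p)}"

abbreviation q_c :: expfac where
  "q_c \<equiv> fst (common_part q p)"

abbreviation f_qp :: rat where
  "f_qp \<equiv> fission_exp q p"

lemma finite_common_exps: "finite common_exps"
  using finite_expo[OF expfac_q] by simp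

lemma common_part_empty: "common_exps = {} \<Longrightarrow> common_part q p = (0, 0)"
  unfolding common_part_def Let_def by (rule if_P)

lemma common_part_nonempty:
  assumes "common_exps \<noteq> {}"
  shows "common_part q p = (trunc (Min common_exps) q, trunc (Min common_exps) q)"
proof -
  have "Min common_exps \<in> common_exps"
    using finite_common_exps assms by (rule Min_in)
  then have "trunc (Min common_exps) p = trunc (Min common_exps) q"
    using compatible[of "Min common_exps"] by auto
  moreover have "common_part q p = (trunc (Min common_exps) q, trunc (Min common_exps) p)"
    unfolding common_part_def Let_def by (rule if_not_P[OF assms])
  ultimately show ?thesis by simp
qed

lemma common_part_snd: "snd (common_part q p) = q_c"
  using common_part_empty common_part_nonempty by (cases "common_exps = {}") simp_all

lemma fission_exp_eq: "f_qp = max (slope (q - q_c)) (slope (p - q_c))"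
  by (simp add: fission_exp_def common_part_snd)

lemma is_expfac_common_part: "is_expfac q_c"
  using common_part_empty common_part_nonempty is_expfac_trunc[OF expfac_q]
  by (cases "common_exps = {}") (simp_all add: is_expfac_def)

lemma fission_exp_less:
  assumes "k \<in> expo q" and "stokes (trunc k q) = stokes (trunc k p)"
  shows "f_qp < k"
proof -
  let ?\<kappa> = "Min common_exps"
  have "k \<in> common_exps" using assms by simp
  then have "common_exps \<noteq> {}" by blast
  have "?\<kappa> \<le> k" "?\<kappa> \<in> common_exps"
    using Min_le[OF finite_common_exps \<open>k \<in> common_exps\<close>]
      Min_in[OF finite_common_exps \<open>common_exps \<noteq> {}\<close>] by simp_all
  then have "0 < ?\<kappa>" using expfac_pos[OF expfac_q] by (auto simp: expo_def)
  have "trunc ?\<kappa> q = trunc ?\<kappa> p"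
    using \<open>?\<kappa> \<in> common_exps\<close> compatible by simp
  then have "f_qp = max (slope (q - trunc ?\<kappa> q)) (slope (p - trunc ?\<kappa> p))"
    unfolding fission_exp_eq common_part_nonempty[OF \<open>common_exps \<noteq> {}\<close>] by simp
  then have "f_qp < ?\<kappa>"
    using slope_diff_trunc_less[OF finite_expo[OF expfac_q] \<open>0 < ?\<kappa>\<close>]
      slope_diff_trunc_less[OF finite_expo[OF expfac_p] \<open>0 < ?\<kappa>\<close>] by simp
  then show ?thesis using \<open>?\<kappa> \<le> k\<close> by simp
qed

lemma common_part_support: "q_c k \<noteq> 0 \<Longrightarrow> f_qp < k"
proof -
  assume "q_c k \<noteq> 0"
  then have "common_exps \<noteq> {}"
    using common_part_empty by force
  then have qc: "q_c = trunc (Min common_exps) q"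
    using common_part_nonempty by simp
  have "Min common_exps \<in> common_exps"
    using finite_common_exps \<open>common_exps \<noteq> {}\<close> by (rule Min_in)
  then have "f_qp < Min common_exps"
    by (auto intro: fission_exp_less)
  moreover have "Min common_exps \<le> k"
    using \<open>q_c k \<noteq> 0\<close> qc by (auto simp: trunc_def split: if_splits)
  ultimately show ?thesis by simp
qed

lemma eq_common_part_above:
  assumes "f_qp < k"
  shows "q k = q_c k" and "p k = q_c k"
proof -
  have "finite (expo (q - q_c))" "finite (expo (p - q_c))"
    using expfac_q expfac_p is_expfac_common_part by (simp_all add: finite_expo is_expfac_diff)
  moreover have "slope (q - q_c) < k" "slope (p - q_c) < k"
    using assms by (simp_all add: fission_exp_eq)
  ultimately have "(q - q_c) k = 0" "(p - q_c) k = 0"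
    using le_slope by (meson not_le)+
  then show "q k = q_c k" "p k = q_c k" by simp_all
qed

lemma fission_exp_pos: "0 < f_qp"
proof -
  have "q - q_c \<noteq> 0 \<or> p - q_c \<noteq> 0"
    using distinct_stokes by auto
  then have "0 < slope (q - q_c) \<or> 0 < slope (p - q_c)"
    using slope_pos is_expfac_diff is_expfac_common_part expfac_q expfac_p by blast
  then show ?thesis by (auto simp: fission_exp_eq less_max_iff_disj)
qed

lemma fission_exp_mem_expo: "q f_qp \<noteq> 0 \<or> p f_qp \<noteq> 0"
proof -
  obtain y where y: "y = q \<or> y = p" "slope (y - q_c) = f_qp"
    using fission_exp_eq by (metis max_def)
  then have "y - q_c \<noteq> 0"
    using fission_exp_pos by auto
  moreover have "finite (expo (y - q_c))"
    using y(1) expfac_q expfac_p is_expfac_common_part by (auto simp: finite_expo is_expfac_diff)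
  ultimately have "(y - q_c) f_qp \<noteq> 0"
    using coeff_slope_nonzero y(2) by metis
  moreover have "q_c f_qp = 0"
    using common_part_support by blast
  ultimately show ?thesis using y(1) by auto
qed

lemma slope_rot_diff: "slope (rot a q - rot b p) = top_moved (expo q) f_qp (a - b)"
proof -
  let ?D = "rot a q - rot b p" and ?N = "moved_above (expo q) f_qp (a - b)"
  have fin: "finite (expo q)" "finite (expo p)" "finite (expo ?D)"
    using expfac_q expfac_p by (simp_all add: finite_expo finite_expo_diff)
  have moved: "?D k \<noteq> 0 \<longleftrightarrow> k \<in> ?N" if "f_qp < k" for k
  proof -
    have "?D k = (rot a q - rot b q) k"
      using eq_common_part_above[OF that] by (simp add: rot_def)
    then show ?thesis
      using rot_diff_rot_eq_0_iff[of a q b k] that by (auto simp: moved_above_def expo_def)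
  qed
  show ?thesis
  proof (cases "?N = {}")
    case False
    with fin(3,1) show ?thesis using moved by (rule slope_eq_top_moved)
  next
    case True
    then have above: "?D k = 0" if "f_qp < k" for k
      using moved that by blast
    txt \<open>Otherwise \<open>rot a (trunc f_qp q) = rot b (trunc f_qp p)\<close> and \<open>f_qp\<close> is an exponent of
      \<open>q\<close>, so \<open>f_qp\<close> would belong to \<open>common_exps\<close>, contradicting \<open>fission_exp_less\<close>.\<close>
    have "?D f_qp \<noteq> 0"
    proof
      assume "?D f_qp = 0"
      then have "?D k = 0" if "f_qp \<le> k" for k
        using above that by (cases "k = f_qp") auto
      then have "rot a (trunc f_qp q) = rot b (trunc f_qp p)"
        by (auto simp: rot_def trunc_def)
      then have "stokes (trunc f_qp q) = stokes (trunc f_qp p)"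
        using finite_expo[OF is_expfac_trunc[OF expfac_q]] finite_expo[OF is_expfac_trunc[OF expfac_p]]
        by (rule stokes_eq_if_rot_eq[rotated 2])
      moreover have "rot a q f_qp = rot b p f_qp"
        using \<open>?D f_qp = 0\<close> by simp
      then have "q f_qp \<noteq> 0"
        using fission_exp_mem_expo rot_eq_0_iff by metis
      ultimately show False
        using fission_exp_less by (auto simp: expo_def)
    qed
    then have "slope ?D = f_qp"
      using slope_eqI[OF fin(3)] above by blast
    then show ?thesis using True by (simp add: top_moved_def)
  qed
qed

lemma expo_common_part: "expo q_c = {k \<in> expo q. f_qp < k}"
  using common_part_support eq_common_part_above by (auto simp: expo_def)

lemma ram_common_part_dvd_iff: "int (ram q_c) dvd t \<longleftrightarrow> moved_above (expo q) f_qp t = {}"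
  using ram_dvd_iff[OF finite_expo[OF is_expfac_common_part]]
  by (auto simp: expo_common_part moved_above_def)

end

definition fission_at :: "pit \<Rightarrow> nat \<Rightarrow> nat \<Rightarrow> rat" where
  "fission_at Q i j = (if i = j then 0 else fission_exp (snd (Q ! i)) (snd (Q ! j)))"

lemma is_expfac_nth: "pointed_irr_type Q \<Longrightarrow> i < length Q \<Longrightarrow> is_expfac (snd (Q ! i))"
  by (simp add: pointed_irr_type_def)

lemma compatible_pair_nth:
  assumes "compatible Q" and "i < length Q" and "j < length Q" and "i \<noteq> j"
  shows "compatible_pair (snd (Q ! i)) (snd (Q ! j))"
  using assms by unfold_locales (auto simp: compatible_def pointed_irr_type_def)

lemma slope_rot_diff_nth:
  assumes "compatible Q" and "i < length Q" and "j < length Q"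
  shows "slope (rot a (snd (Q ! i)) - rot b (snd (Q ! j)))
         = top_moved (levels (snd (Q ! i))) (fission_at Q i j) (a - b)"
proof (cases "i = j")
  case True
  have "is_expfac (snd (Q ! i))"
    using assms by (simp add: compatible_def is_expfac_nth)
  then show ?thesis
    using True by (simp add: fission_at_def slope_rot_diff_self top_moved_levels)
next
  case False
  interpret compatible_pair "snd (Q ! i)" "snd (Q ! j)"
    using compatible_pair_nth assms False .
  show ?thesis
    using False fission_exp_pos expfac_q
    by (simp add: fission_at_def slope_rot_diff top_moved_levels less_imp_le)
qed

lemma rr_dvd_iff:
  assumes "compatible Q" and "i < length Q" and "j < length Q"
  shows "int (rr Q i j) dvd t \<longleftrightarrow> moved_above (levels (snd (Q ! i))) (fission_at Q i j) t = {}"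
proof (cases "i = j")
  case True
  let ?q = "snd (Q ! i)"
  have q: "is_expfac ?q"
    using assms by (simp add: compatible_def is_expfac_nth)
  have "int (rr Q i j) dvd t \<longleftrightarrow> (\<forall>k\<in>expo ?q. of_int t * k \<in> \<int>)"
    using True ram_dvd_iff[OF finite_expo[OF q]] by (simp add: rr_def)
  also have "\<dots> \<longleftrightarrow> moved_above (expo ?q) 0 t = {}"
    using expfac_pos[OF q] by (auto simp: moved_above_def expo_def)
  finally show ?thesis
    using True moved_above_levels_empty_iff[OF q] by (simp add: fission_at_def)
next
  case False
  interpret compatible_pair "snd (Q ! i)" "snd (Q ! j)"
    using compatible_pair_nth assms False .
  show ?thesis
    using False ram_common_part_dvd_iff moved_above_levels_empty_iff[OF expfac_q] fission_exp_pos
    by (simp add: rr_def fission_at_def less_imp_le)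
qed

lemma AutQ_levels: "\<pi> \<in> AutQ Q \<Longrightarrow> i < length Q \<Longrightarrow> levels (snd (Q ! \<pi> i)) = levels (snd (Q ! i))"
  by (simp add: AutQ_def)

lemma AutQ_nth_less: "\<pi> \<in> AutQ Q \<Longrightarrow> i < length Q \<Longrightarrow> \<pi> i < length Q"
  using permutes_in_image[of \<pi> "{..<length Q}" i] by (simp add: AutQ_def)

lemma AutQ_fission_at:
  assumes "\<pi> \<in> AutQ Q" and "i < length Q" and "j < length Q"
  shows "fission_at Q (\<pi> i) (\<pi> j) = fission_at Q i j"
proof -
  have "inj \<pi>"
    using assms(1) permutes_inj by (auto simp: AutQ_def)
  then have "\<pi> i = \<pi> j \<longleftrightarrow> i = j"
    by (simp add: inj_eq)
  then show ?thesis
    using assms by (simp add: AutQ_def fission_at_def)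
qed

lemma permutes_all_pairs_iff:
  assumes "\<pi> permutes {..<m}"
  shows "(\<forall>i<m. \<forall>j<m. P (\<pi> i) (\<pi> j)) \<longleftrightarrow> (\<forall>i<m. \<forall>j<m. P i j)"
  using permutes_in_image[OF assms] permutes_inverses(1)[OF assms]
    permutes_in_image[OF permutes_inv[OF assms]]
  by (metis lessThan_iff)

lemma length_act [simp]: "length (act g P) = length P"
  by (simp add: act_def)

lemma act_nth:
  "i < length P \<Longrightarrow> act (\<pi>, d) P ! i = (fst (P ! \<pi> i), rot (int (d (\<pi> i))) (snd (P ! \<pi> i)))"
  by (simp add: act_def funpow_sigma_eq_rot)

lemma WQ_iff_moved_above:
  assumes "compatible Q" and "(\<pi>, d) \<in> GQ Q"
  shows "(\<pi>, d) \<in> WQ Q \<longleftrightarrow> (\<forall>i<length Q. \<forall>j<length Q.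
           moved_above (levels (snd (Q ! i))) (fission_at Q i j) (int (d (\<pi> i)) - int (d (\<pi> j))) = {})"
proof -
  have \<pi>: "\<pi> \<in> AutQ Q" "\<pi> permutes {..<length Q}"
    using assms(2) by (auto simp: GQ_def AutQ_def)
  have "(\<pi>, d) \<in> WQ Q \<longleftrightarrow> (\<forall>i<length Q. \<forall>j<length Q. [d i = d j] (mod rr Q i j))"
    using assms(2) by (simp add: WQ_def)
  also have "\<dots> \<longleftrightarrow> (\<forall>i<length Q. \<forall>j<length Q. [d (\<pi> i) = d (\<pi> j)] (mod rr Q (\<pi> i) (\<pi> j)))"
    by (rule permutes_all_pairs_iff[OF \<pi>(2), symmetric])
  also have "\<dots> \<longleftrightarrow> (\<forall>i<length Q. \<forall>j<length Q. moved_above (levels (snd (Q ! \<pi> i)))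
                      (fission_at Q (\<pi> i) (\<pi> j)) (int (d (\<pi> i)) - int (d (\<pi> j))) = {})"
    using rr_dvd_iff[OF assms(1)] permutes_in_image[OF \<pi>(2)]
    by (simp add: cong_int_iff[symmetric] cong_iff_dvd_diff)
  also have "\<dots> \<longleftrightarrow> (\<forall>i<length Q. \<forall>j<length Q. moved_above (levels (snd (Q ! i)))
                      (fission_at Q i j) (int (d (\<pi> i)) - int (d (\<pi> j))) = {})"
    using AutQ_levels AutQ_fission_at \<pi>(1) by simp
  finally show ?thesis .
qed

lemma pit_equiv_act_iff:
  assumes "compatible Q" and "(\<pi>, d) \<in> GQ Q"
  shows "pit_equiv (act (\<pi>, d) Q) Q \<longleftrightarrow> (\<forall>i<length Q. \<forall>j<length Q.
           moved_above (levels (snd (Q ! i))) (fission_at Q i j) (int (d (\<pi> i)) - int (d (\<pi> j))) = {})"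
proof -
  have \<pi>: "\<pi> \<in> AutQ Q" "\<And>i. i < length Q \<Longrightarrow> \<pi> i < length Q"
    using assms(2) AutQ_nth_less by (auto simp: GQ_def)
  have "slope ((sigma ^^ k) (snd (act (\<pi>, d) Q ! i)) - (sigma ^^ l) (snd (act (\<pi>, d) Q ! j)))
        = top_moved (levels (snd (Q ! i))) (fission_at Q i j)
            (int k - int l + (int (d (\<pi> i)) - int (d (\<pi> j))))"
    if "i < length Q" "j < length Q" for i j k l
    using that slope_rot_diff_nth[OF assms(1) \<pi>(2) \<pi>(2)] AutQ_levels AutQ_fission_at \<pi>
    by (simp add: act_nth funpow_sigma_eq_rot rot_rot algebra_simps)
  moreover have "slope ((sigma ^^ k) (snd (Q ! i)) - (sigma ^^ l) (snd (Q ! j)))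
        = top_moved (levels (snd (Q ! i))) (fission_at Q i j) (int k - int l)"
    if "i < length Q" "j < length Q" for i j k l
    using slope_rot_diff_nth[OF assms(1) that] by (simp add: funpow_sigma_eq_rot)
  moreover have "fst (act (\<pi>, d) Q ! i) = fst (Q ! i)" if "i < length Q" for i
    using that \<pi> by (simp add: act_nth AutQ_def)
  moreover have "finite (levels (snd (Q ! i)))" if "i < length Q" for i
    using assms(1) that by (simp add: compatible_def finite_levels is_expfac_nth)
  ultimately show ?thesis
    by (simp add: pit_equiv_def top_moved_shift_invariant_iff)
qed

section \<open>Every \<open>g\<cdot>Q\<close> is some \<open>Q\<^sub>a\<close>\<close>

lemma sum_apply: "(\<Sum>j\<in>A. g j) k = (\<Sum>j\<in>A. g j k)"
  by (induction A rule: infinite_finite_induct) auto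

lemma sum_monom_ef_eq:
  fixes x :: expfac and r :: nat and K :: rat
  assumes "0 < r" and x: "is_expfac x" and "\<And>k. k \<in> expo x \<Longrightarrow> of_nat r * k \<in> \<int> \<and> k \<le> K"
  shows "(\<Sum>j\<in>{1..nat \<lfloor>of_nat r * K\<rfloor>}. monom_ef (x (of_nat j / of_nat r)) (of_nat j / of_nat r)) = x"
proof
  fix k
  let ?A = "{1..nat \<lfloor>of_nat r * K\<rfloor>}"
  have "(\<Sum>j\<in>?A. monom_ef (x (of_nat j / of_nat r)) (of_nat j / of_nat r)) k
        = (\<Sum>j\<in>?A. if of_nat j / of_nat r = k then x k else 0)"
    by (auto simp: sum_apply monom_ef_def intro!: sum.cong)
  also have "\<dots> = x k"
  proof (cases "x k = 0")
    case False
    then obtain z where z: "of_nat r * k = of_int z"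
      using assms(3) by (auto simp: expo_def elim!: Ints_cases)
    have "0 < k" "k \<le> K" using expfac_pos[OF x False] assms(3) False by (auto simp: expo_def)
    then have "(0::rat) < of_int z" "of_int z \<le> of_nat r * K"
      using \<open>0 < r\<close> by (simp_all flip: z add: mult_left_mono)
    then have "0 < z" "z \<le> \<lfloor>of_nat r * K\<rfloor>"
      by (simp_all add: le_floor_iff)
    then have "nat z \<in> ?A" by auto
    moreover have "of_nat j / of_nat r = k \<longleftrightarrow> j = nat z" for j
      using z \<open>0 < r\<close> \<open>0 < z\<close> by (auto simp: field_simps)
    ultimately show ?thesis by simp
  qed (auto intro: sum.neutral)
  finally show "(\<Sum>j\<in>?A. monom_ef (x (of_nat j / of_nat r)) (of_nat j / of_nat r)) k = x k" .
qed

lemma ram_dvd_ramQ: "i < length Q \<Longrightarrow> ram (snd (Q ! i)) dvd ramQ Q"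
  by (auto simp: ramQ_def intro!: dvd_Lcm)

lemma ramQ_pos:
  assumes "pointed_irr_type Q"
  shows "0 < ramQ Q"
proof -
  have "0 \<notin> set (map (\<lambda>p. ram (snd p)) Q)"
    using assms ram_ge_1_and_mult_Ints[OF finite_expo[OF is_expfac_nth]]
    by (fastforce simp: in_set_conv_nth)
  then show ?thesis
    unfolding ramQ_def by (metis Lcm_0_iff finite_set gr0I)
qed

lemma slope_le_maxslope: "i < length Q \<Longrightarrow> slope (snd (Q ! i)) \<le> maxslope Q"
  by (auto simp: maxslope_def)

lemma act_eq_Q_a:
  assumes "pointed_irr_type Q" and "(\<pi>, d) \<in> GQ Q"
  shows "\<exists>a. act (\<pi>, d) Q = Q_a Q a"
proof -
  let ?x = "\<lambda>i. rot (int (d (\<pi> i))) (snd (Q ! \<pi> i))"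
  have \<pi>: "\<pi> \<in> AutQ Q" "\<And>i. i < length Q \<Longrightarrow> \<pi> i < length Q"
    using assms(2) AutQ_nth_less by (auto simp: GQ_def)
  have "(\<Sum>j\<in>{1..sQ Q}. monom_ef (?x i (of_nat j / of_nat (ramQ Q))) (of_nat j / of_nat (ramQ Q)))
        = ?x i" if "i < length Q" for i
  proof -
    let ?q = "snd (Q ! \<pi> i)"
    have q: "is_expfac ?q" using is_expfac_nth[OF assms(1) \<pi>(2)[OF that]] .
    have "of_nat (ramQ Q) * k \<in> \<int> \<and> k \<le> maxslope Q" if "k \<in> expo ?q" for k
    proof
      obtain c where "ramQ Q = ram ?q * c"
        using ram_dvd_ramQ[OF \<pi>(2)] \<open>i < length Q\<close> by blast
      then have "of_nat (ramQ Q) * k = of_nat c * (k * of_nat (ram ?q))" by simp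
      then show "of_nat (ramQ Q) * k \<in> \<int>"
        using ram_ge_1_and_mult_Ints[OF finite_expo[OF q]] that by (metis Ints_mult Ints_of_nat)
      show "k \<le> maxslope Q"
        using le_slope[OF finite_expo[OF q], of k] that slope_le_maxslope[OF \<pi>(2)] \<open>i < length Q\<close>
        by (force simp: expo_def)
    qed
    then show ?thesis
      using sum_monom_ef_eq[OF ramQ_pos[OF assms(1)] is_expfac_rot[OF q]] by (simp add: sQ_def)
  qed
  then have "act (\<pi>, d) Q = Q_a Q (\<lambda>i j. ?x i (of_nat j / of_nat (ramQ Q)))"
    using \<pi>(1) by (auto intro!: nth_equalityI simp: act_nth Q_a_def AutQ_def)
  then show ?thesis by blast
qed

theorem mainTheorem18:
  fixes Q :: pit and \<pi> d :: "nat \<Rightarrow> nat"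
  assumes "compatible Q"
    and "(\<pi>, d) \<in> GQ Q"
  shows "(\<exists>a\<in>BQ Q. act (\<pi>, d) Q = Q_a Q a) \<longleftrightarrow>
         (\<pi>, d) \<in> WQ Q"
proof -
  have "pointed_irr_type Q" using assms(1) by (simp add: compatible_def)
  then have "(\<exists>a\<in>BQ Q. act (\<pi>, d) Q = Q_a Q a) \<longleftrightarrow> pit_equiv (act (\<pi>, d) Q) Q"
    using act_eq_Q_a[OF _ assms(2)] by (auto simp: BQ_def)
  also have "\<dots> \<longleftrightarrow> (\<pi>, d) \<in> WQ Q"
    unfolding pit_equiv_act_iff[OF assms] WQ_iff_moved_above[OF assms] ..
  finally show ?thesis .
qed

end
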